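(* Let $q=3^m$ with $m\ge1$. Then for every $i\in\{0,1,2\}$, $$\#\{x\in\mathbb{F}_q:\ \mathrm{Tr}_{\mathbb{F}_q/\mathbb{F}_3}(x)=i,\ \mathrm{Tr}_{\mathbb{F}_q/\mathbb{F}_3}(x^2)=0\}\ge\frac{q-6\sqrt q}{9}.$$
   Context: $\mathrm{Tr}_{\mathbb{F}_q/\mathbb{F}_3}$ is the absolute trace from $\mathbb{F}_q$ to $\mathbb{F}_3$. *)

theory Defs
  imports Complex_Main
begin

text \<open>Its values lie in the prime
  subfield, whose elements are of_nat 0, of_nat 1, of_nat 2.\<close>
definition abs_trace3 :: "nat \<Rightarrow> 'a::field \<Rightarrow> 'a" where
  "abs_trace3 m x = (\<Sum>j<m. x ^ (3 ^ j))"

end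

(*
  Let q = 3^m, r = q/3 and N(u, v) = #{x. Tr x = u \<and> Tr (x^2) = v} for u, v in F_3.
  The trace is additive and onto F_3, so each row of the 3x3 matrix N sums to r.
  The sum of all N(u, v)^2 counts the pairs (x, y) with equal traces of x and x^2;
  putting x = y + h this means Tr h = 0 and Tr (2 h y + h^2) = 0, an affine condition
  on y, so there are q + (r - 1) r = r^2 + 2 r such pairs. Each row has square sum at
  least r^2/3, hence a fixed row has square sum at most r^2/3 + 2 r, and together with
  its row sum r this bounds each of its entries below by r/3 - 2 sqrt q / 3.
*)
theory Submission
  imports Defs "HOL-Number_Theory.Residues" "HOL-Computational_Algebra.Polynomial"
begin

text \<open>The library's \<open>finite_field_power_card_eq_same\<close> is stated for the sort
  \<open>finite_field\<close> only, not for \<open>'a::{field,finite}\<close>.\<close>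

lemma power_card_eq_self:
  fixes x :: "'a::{field,finite}"
  shows "x ^ card (UNIV :: 'a set) = x"
proof (cases "x = 0")
  case True
  then show ?thesis
    using finite_UNIV_card_ge_0[where 'a = 'a] by (simp add: power_0_left)
next
  case False
  let ?U = "UNIV - {0 :: 'a}"
  have "x ^ card ?U * (\<Prod>y\<in>?U. y) = (\<Prod>y\<in>?U. x * y)"
    by (simp add: prod.distrib)
  also have "\<dots> = (\<Prod>y\<in>?U. y)"
    by (rule prod.reindex_bij_witness[of _ "\<lambda>y. y / x" "\<lambda>y. x * y"]) (use False in auto)
  finally have "x ^ card ?U = 1"
    by simp
  moreover have "card (UNIV :: 'a set) = Suc (card ?U)"
    using card_Diff_singleton[of 0 "UNIV :: 'a set"] finite_UNIV_card_ge_0[where 'a = 'a] by simp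
  ultimately show ?thesis
    by (metis power_Suc mult_1_right)
qed

lemma card_eq_sum_card_fibers:
  assumes "finite A" "finite B" "f ` A \<subseteq> B"
  shows "card A = (\<Sum>b\<in>B. card {x\<in>A. f x = b})"
proof -
  have "{b. f x = b \<and> b \<in> B} = {f x}" if "x \<in> A" for x
    using that assms(3) by auto
  then have "(\<Sum>b\<in>B. card {x\<in>A. f x = b}) = (\<Sum>x\<in>A. 1)"
    by (intro sum_multicount_gen) (use assms in auto)
  then show ?thesis
    by simp
qed

lemma sum_card_fibers_squared:
  fixes f :: "'a::finite \<Rightarrow> 'b"
  assumes "finite B" "range f \<subseteq> B"
  shows "(\<Sum>b\<in>B. card {x. f x = b} ^ 2) = card {(x, y). f x = f y}"
proof -
  have "card {(x, y). f x = f y} = (\<Sum>b\<in>B. card {p\<in>{(x, y). f x = f y}. f (fst p) = b})"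
    by (rule card_eq_sum_card_fibers) (use assms in auto)
  also have "\<dots> = (\<Sum>b\<in>B. card ({x. f x = b} \<times> {x. f x = b}))"
    by (intro sum.cong refl arg_cong[where f = card]) auto
  finally show ?thesis
    by (simp add: card_cartesian_product power2_eq_square)
qed

lemma card_pairs_by_difference:
  fixes R :: "'a::{ab_group_add,finite} \<Rightarrow> 'a \<Rightarrow> bool"
  shows "card {(x, y). R x y} = (\<Sum>h\<in>UNIV. card {y. R (y + h) y})"
proof -
  have "{(x, y). R x y} = (\<lambda>(h, y). (y + h, y)) ` (SIGMA h:UNIV. {y. R (y + h) y})"
  proof (intro equalityI subsetI)
    fix p assume "p \<in> {(x, y). R x y}"
    then show "p \<in> (\<lambda>(h, y). (y + h, y)) ` (SIGMA h:UNIV. {y. R (y + h) y})"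
      by (intro image_eqI[of _ _ "(fst p - snd p, snd p)"]) auto
  qed auto
  moreover have "inj (\<lambda>(h, y). (y + h, y :: 'a))"
    by (auto intro: injI)
  ultimately show ?thesis
    by (simp add: card_image inj_on_subset)
qed

lemma card_fiber_additive:
  fixes f :: "'a::ab_group_add \<Rightarrow> 'b::ab_group_add"
  assumes f_add: "\<And>x y. f (x + y) = f x + f y"
  shows "card {x. f x = f w} = card {x. f x = 0}"
proof -
  have f_diff: "f (x - w) = f x - f w" for x
    using f_add[of "x - w" w] by (simp add: eq_diff_eq)
  have "bij_betw (\<lambda>x. x + w) {x. f x = 0} {x. f x = f w}"
    by (rule bij_betw_byWitness[where f' = "\<lambda>x. x - w"]) (auto simp: f_add f_diff)
  then show ?thesis
    by (rule bij_betw_same_card[symmetric])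
qed

lemma card_affine_preimage:
  fixes a b :: "'a::field"
  assumes "a \<noteq> 0"
  shows "card {y. a * y + b \<in> S} = card S"
proof -
  have "surj (\<lambda>y. a * y + b)"
    by (rule surjI[of _ "\<lambda>z. (z - b) / a"]) (use assms in simp)
  moreover have "inj (\<lambda>y. a * y + b)"
    by (rule injI) (use assms in simp)
  ultimately show ?thesis
    using card_vimage_inj[of "\<lambda>y. a * y + b" S] by (simp add: vimage_def)
qed

lemma sum_squares_three_ge:
  fixes a b c :: real
  shows "(a + b + c) ^ 2 / 3 \<le> a ^ 2 + b ^ 2 + c ^ 2"
proof -
  have "0 \<le> (a - b) ^ 2 + (b - c) ^ 2 + (a - c) ^ 2"
    by simp
  then show ?thesis
    by (simp add: power2_eq_square algebra_simps)
qed

lemma lower_bound_from_sum_squares: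
  fixes a b c r :: real
  assumes "a + b + c = r" "a ^ 2 + b ^ 2 + c ^ 2 \<le> r ^ 2 / 3 + 2 * r"
  shows "(3 * r - 6 * sqrt (3 * r)) / 9 \<le> a"
proof -
  define e where "e = r / 3 - a"
  have "0 \<le> (b - c) ^ 2"
    by simp
  then have "(b + c) ^ 2 \<le> 2 * (b ^ 2 + c ^ 2)"
    by (simp add: power2_eq_square algebra_simps)
  moreover have "b + c = r - a"
    using assms(1) by simp
  ultimately have "(r - a) ^ 2 \<le> 2 * (b ^ 2 + c ^ 2)"
    by simp
  moreover have "a ^ 2 + (r - a) ^ 2 / 2 = r ^ 2 / 3 + 3 / 2 * e ^ 2"
    unfolding e_def by (simp add: power2_eq_square field_simps)
  ultimately have "(3 * e) ^ 2 \<le> 4 * (3 * r)"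
    using assms(2) by (simp add: power_mult_distrib)
  then have "3 * e \<le> sqrt (4 * (3 * r))"
    by (rule real_le_rsqrt)
  also have "\<dots> = 2 * sqrt (3 * r)"
    by (simp only: real_sqrt_mult real_sqrt_four)
  finally show ?thesis
    unfolding e_def by simp
qed

lemma power_power_eq_self:
  fixes c :: "'a::monoid_mult"
  assumes "c ^ k = c"
  shows "c ^ (k ^ j) = c"
proof (induction j)
  case (Suc j)
  then show ?case
    using assms by (simp add: power_mult mult.commute[of k])
qed simp

lemma poly_nonzero_somewhere:
  fixes p :: "'a::{idom,finite} poly"
  assumes "p \<noteq> 0" "degree p < card (UNIV :: 'a set)"
  shows "\<exists>x. poly p x \<noteq> 0"
proof (rule ccontr)
  assume "\<not> ?thesis"
  then have "{x. poly p x = 0} = UNIV"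
    by auto
  then show False
    using card_poly_roots_bound[OF assms(1)] assms(2) by simp
qed

context
  assumes CHAR_3: "CHAR('a::comm_ring_1) = 3"
begin

lemma three_eq_zero_CHAR_3: "(3 :: 'a) = 0"
  using of_nat_CHAR[where 'a = 'a] CHAR_3 by simp

lemma zero_one_two_distinct_CHAR_3: "(0 :: 'a) \<noteq> 1" "(0 :: 'a) \<noteq> 2" "(1 :: 'a) \<noteq> 2"
proof -
  have "of_nat k \<noteq> (0 :: 'a)" if "k \<in> {1, 2}" for k
    using that CHAR_3 by (auto simp: of_nat_eq_0_iff_char_dvd)
  then show "(0 :: 'a) \<noteq> 1" "(0 :: 'a) \<noteq> 2" "(1 :: 'a) \<noteq> 2"
    by (metis insertCI of_nat_1 of_nat_numeral add_cancel_right_right one_add_one)+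
qed

lemma sum_zero_one_two_CHAR_3:
  "(\<Sum>v\<in>{0, 1, 2 :: 'a}. g v) = g 0 + g 1 + (g 2 :: 'b::comm_monoid_add)"
  using zero_one_two_distinct_CHAR_3 by (simp add: add.assoc)

end

lemma cube_eq_self_iff_CHAR_3:
  fixes c :: "'a::idom"
  assumes "CHAR('a) = 3"
  shows "c ^ 3 = c \<longleftrightarrow> c \<in> {0, 1, 2}"
proof -
  have "c ^ 3 - c = c * (c - 1) * (c - 2) + 3 * (c ^ 2 - c)"
    by (simp add: algebra_simps power2_eq_square power3_eq_cube)
  then have "c ^ 3 - c = c * (c - 1) * (c - 2)"
    using three_eq_zero_CHAR_3[OF assms] by simp
  then show ?thesis
    by (auto simp: eq_iff_diff_eq_0[of "c ^ 3"])
qed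

lemma abs_trace3_zero: "abs_trace3 m (0 :: 'a::field) = 0"
  by (simp add: abs_trace3_def power_0_left)

lemma abs_trace3_add:
  fixes x y :: "'a::field"
  assumes "CHAR('a) = 3"
  shows "abs_trace3 m (x + y) = abs_trace3 m x + abs_trace3 m y"
proof -
  have "(x + y) ^ (3 ^ j) = x ^ (3 ^ j) + y ^ (3 ^ j)" for j
    by (rule freshmans_dream') (use assms in auto)
  then show ?thesis
    unfolding abs_trace3_def by (simp add: sum.distrib)
qed

lemma abs_trace3_scale:
  fixes c x :: "'a::field"
  assumes "c ^ 3 = c"
  shows "abs_trace3 m (c * x) = c * abs_trace3 m x"
  unfolding abs_trace3_def
  by (simp add: power_mult_distrib power_power_eq_self[OF assms] sum_distrib_left)

definition trace_pair_count :: "nat \<Rightarrow> 'a::field \<Rightarrow> 'a \<Rightarrow> nat" where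
  "trace_pair_count m u v = card {x. abs_trace3 m x = u \<and> abs_trace3 m (x ^ 2) = v}"

context
  fixes m :: nat
  assumes m_pos: "m \<ge> 1"
    and card_UNIV: "card (UNIV :: 'a::{field,finite} set) = 3 ^ m"
begin

lemma CHAR_eq_3: "CHAR('a) = 3"
proof -
  have "prime CHAR('a)"
    by (intro prime_CHAR_semidom finite_imp_CHAR_pos) simp
  moreover have "CHAR('a) dvd 3 ^ m"
    using CHAR_dvd_CARD[where 'a = 'a] card_UNIV by simp
  ultimately have "CHAR('a) dvd 3"
    using prime_dvd_power by blast
  with \<open>prime CHAR('a)\<close> show ?thesis
    by (simp add: primes_dvd_imp_eq)
qed

lemma abs_trace3_cube: "abs_trace3 m (x :: 'a) ^ 3 = abs_trace3 m x"
proof -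
  have "abs_trace3 m x ^ 3 = (\<Sum>j<m. x ^ (3 ^ Suc j))"
    unfolding abs_trace3_def
    by (subst freshmans_dream_sum) (simp_all add: CHAR_eq_3 power_mult[symmetric] mult.commute)
  moreover have "(\<Sum>j<Suc m. x ^ (3 ^ j)) = x + (\<Sum>j<m. x ^ (3 ^ Suc j))"
    by (subst sum.lessThan_Suc_shift) simp
  moreover have "x ^ (3 ^ m) = x"
    using power_card_eq_self[of x] card_UNIV by simp
  ultimately show ?thesis
    unfolding abs_trace3_def by (simp add: add.commute)
qed

lemma abs_trace3_in_F3: "abs_trace3 m (x :: 'a) \<in> {0, 1, 2}"
  using abs_trace3_cube cube_eq_self_iff_CHAR_3[OF CHAR_eq_3] by blast

lemma abs_trace3_nonzero: "\<exists>z :: 'a. abs_trace3 m z \<noteq> 0"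
proof -
  define p :: "'a poly" where "p = (\<Sum>j<m. monom 1 (3 ^ j))"
  have "coeff p (3 ^ (m - 1)) = (\<Sum>j<m. if 3 ^ j = (3::nat) ^ (m - 1) then 1 else 0)"
    unfolding p_def by (simp add: coeff_sum coeff_monom)
  also have "\<dots> = (\<Sum>j\<in>{m - 1}. 1)"
    by (rule sum.mono_neutral_cong_right) (use m_pos in auto)
  finally have "p \<noteq> 0"
    by auto
  moreover have "degree p \<le> 3 ^ (m - 1)"
    unfolding p_def
    by (rule degree_sum_le) (use m_pos in \<open>auto intro: order.trans[OF degree_monom_le]\<close>)
  moreover have "(3::nat) ^ (m - 1) < 3 ^ m"
    using m_pos by simp
  ultimately obtain z where "poly p z \<noteq> 0"
    using poly_nonzero_somewhere[of p] card_UNIV by fastforce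
  moreover have "poly p z = abs_trace3 m z"
    unfolding p_def abs_trace3_def by (simp add: poly_sum poly_monom)
  ultimately show ?thesis
    by auto
qed

lemma abs_trace3_surj:
  assumes "c \<in> {0, 1, 2}"
  shows "\<exists>w :: 'a. abs_trace3 m w = c"
proof -
  obtain z :: 'a where z: "abs_trace3 m z \<noteq> 0"
    using abs_trace3_nonzero by blast
  define t where "t = abs_trace3 m z"
  have "t * (t ^ 2 - 1) = 0"
    using abs_trace3_cube[of z] by (simp add: t_def algebra_simps power2_eq_square power3_eq_cube)
  then have "t * t = 1"
    using z by (simp add: t_def power2_eq_square)
  then have "abs_trace3 m (t * z) = 1"
    by (simp add: abs_trace3_scale abs_trace3_cube t_def)
  moreover have "c ^ 3 = c"
    using assms cube_eq_self_iff_CHAR_3[OF CHAR_eq_3] by blast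
  ultimately have "abs_trace3 m (c * (t * z)) = c"
    by (simp add: abs_trace3_scale)
  then show ?thesis ..
qed

lemma card_abs_trace3_fiber:
  assumes "c \<in> {0, 1, 2}"
  shows "card {x :: 'a. abs_trace3 m x = c} = 3 ^ (m - 1)"
proof -
  have fiber_eq_kernel: "card {x :: 'a. abs_trace3 m x = c} = card {x :: 'a. abs_trace3 m x = 0}"
    if c_F3: "c \<in> {0, 1, 2}" for c
  proof -
    obtain w :: 'a where "abs_trace3 m w = c"
      using abs_trace3_surj[OF c_F3] ..
    then show ?thesis
      using card_fiber_additive[of "abs_trace3 m" w] abs_trace3_add[OF CHAR_eq_3] by simp
  qed
  have "3 ^ m = card (UNIV :: 'a set)"
    using card_UNIV ..
  also have "\<dots> = (\<Sum>c\<in>{0, 1, 2 :: 'a}. card {x\<in>UNIV. abs_trace3 m x = c})"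
    by (rule card_eq_sum_card_fibers) (use abs_trace3_in_F3 in auto)
  also have "\<dots> = 3 * card {x :: 'a. abs_trace3 m x = 0}"
    using fiber_eq_kernel[of 1] fiber_eq_kernel[of 2]
    by (simp add: sum_zero_one_two_CHAR_3[OF CHAR_eq_3])
  finally have "3 * 3 ^ (m - 1) = 3 * card {x :: 'a. abs_trace3 m x = 0}"
    using m_pos by (cases m) auto
  then show ?thesis
    using fiber_eq_kernel[OF assms] by simp
qed

lemma sum_trace_pair_count_row:
  assumes "u \<in> {0, 1, 2}"
  shows "(\<Sum>v\<in>{0, 1, 2}. real (trace_pair_count m (u :: 'a) v)) = 3 ^ (m - 1)"
proof -
  have "card {x :: 'a. abs_trace3 m x = u}
      = (\<Sum>v\<in>{0, 1, 2}. card {x\<in>{x. abs_trace3 m x = u}. abs_trace3 m (x ^ 2) = v})"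
    by (rule card_eq_sum_card_fibers) (use abs_trace3_in_F3 in auto)
  then have "(\<Sum>v\<in>{0, 1, 2}. trace_pair_count m u v) = 3 ^ (m - 1)"
    using card_abs_trace3_fiber[OF assms] by (simp add: trace_pair_count_def)
  then show ?thesis
    by (metis of_nat_sum of_nat_numeral of_nat_power)
qed

lemma card_shift_collisions:
  "card {y :: 'a. abs_trace3 m (y + h) = abs_trace3 m y
                 \<and> abs_trace3 m ((y + h) ^ 2) = abs_trace3 m (y ^ 2)}
   = (if h = 0 then 3 ^ m else if abs_trace3 m h = 0 then 3 ^ (m - 1) else 0)"
proof -
  have Tr_add: "abs_trace3 m (x + y) = abs_trace3 m x + abs_trace3 m y" for x y :: 'a
    using abs_trace3_add[OF CHAR_eq_3] .
  have "(y + h) ^ 2 = y ^ 2 + (2 * h * y + h ^ 2)" for y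
    by (simp add: power2_eq_square algebra_simps)
  then have collision_iff: "abs_trace3 m (y + h) = abs_trace3 m y
      \<and> abs_trace3 m ((y + h) ^ 2) = abs_trace3 m (y ^ 2)
    \<longleftrightarrow> abs_trace3 m h = 0 \<and> 2 * h * y + h ^ 2 \<in> {z. abs_trace3 m z = 0}" for y
    by (simp add: Tr_add)
  show ?thesis
  proof (cases "h = 0")
    case True
    then show ?thesis
      using card_UNIV by (simp add: abs_trace3_zero)
  next
    case False
    then have "2 * h \<noteq> 0"
      using zero_one_two_distinct_CHAR_3[OF CHAR_eq_3] by simp
    then show ?thesis
      using False card_affine_preimage[of "2 * h" "h ^ 2" "{z. abs_trace3 m z = 0}"]
        card_abs_trace3_fiber[of 0]
      by (simp add: collision_iff)
  qed
qed

lemma card_trace_pair_collisions: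
  "card {(x :: 'a, y). abs_trace3 m x = abs_trace3 m y \<and> abs_trace3 m (x ^ 2) = abs_trace3 m (y ^ 2)}
   = (3 ^ (m - 1)) ^ 2 + 2 * 3 ^ (m - 1)"
proof -
  define r :: nat where "r = 3 ^ (m - 1)"
  define K where "K = {h :: 'a. abs_trace3 m h = 0}"
  have "0 \<in> K"
    by (simp add: K_def abs_trace3_zero)
  have "3 ^ m = 3 * r"
    using m_pos by (cases m) (simp_all add: r_def)
  have "card {(x :: 'a, y). abs_trace3 m x = abs_trace3 m y \<and> abs_trace3 m (x ^ 2) = abs_trace3 m (y ^ 2)}
      = (\<Sum>h\<in>UNIV. card {y :: 'a. abs_trace3 m (y + h) = abs_trace3 m y
                                  \<and> abs_trace3 m ((y + h) ^ 2) = abs_trace3 m (y ^ 2)})"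
    by (rule card_pairs_by_difference)
  also have "\<dots> = (\<Sum>h\<in>UNIV. if h = 0 then 3 * r else if h \<in> K then r else 0)"
    unfolding card_shift_collisions \<open>3 ^ m = 3 * r\<close> by (rule sum.cong) (simp_all add: r_def K_def)
  also have "\<dots> = 3 * r + (\<Sum>h\<in>K - {0}. r)"
    by (subst sum.remove[of _ 0]) (auto simp: sum.If_cases Int_def Diff_eq conj_commute)
  also have "\<dots> = 3 * r + (r - 1) * r"
    using \<open>0 \<in> K\<close> card_abs_trace3_fiber[of 0] by (simp add: K_def r_def)
  also have "\<dots> = r ^ 2 + 2 * r"
    by (cases r) (simp_all add: power2_eq_square algebra_simps)
  finally show ?thesis
    unfolding r_def .
qed

lemma sum_trace_pair_count_squares:
  "(\<Sum>u\<in>{0, 1, 2}. \<Sum>v\<in>{0, 1, 2}. trace_pair_count m (u :: 'a) v ^ 2)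
   = (3 ^ (m - 1)) ^ 2 + 2 * 3 ^ (m - 1)"
proof -
  let ?f = "\<lambda>x :: 'a. (abs_trace3 m x, abs_trace3 m (x ^ 2))"
  have "(\<Sum>u\<in>{0, 1, 2}. \<Sum>v\<in>{0, 1, 2}. trace_pair_count m (u :: 'a) v ^ 2)
      = (\<Sum>(u, v)\<in>{0, 1, 2 :: 'a} \<times> {0, 1, 2}. trace_pair_count m u v ^ 2)"
    by (rule sum.cartesian_product)
  also have "\<dots> = (\<Sum>w\<in>{0, 1, 2} \<times> {0, 1, 2}. card {x. ?f x = w} ^ 2)"
    by (rule sum.cong) (auto simp: trace_pair_count_def)
  also have "\<dots> = card {(x, y). ?f x = ?f y}"
    by (rule sum_card_fibers_squared) (use abs_trace3_in_F3 in auto)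
  also have "\<dots> = (3 ^ (m - 1)) ^ 2 + 2 * 3 ^ (m - 1)"
    using card_trace_pair_collisions by simp
  finally show ?thesis .
qed

lemma sum_trace_pair_count_row_squares_le:
  assumes "c \<in> {0, 1, 2}"
  shows "(\<Sum>v\<in>{0, 1, 2}. real (trace_pair_count m (c :: 'a) v) ^ 2)
         \<le> real (3 ^ (m - 1)) ^ 2 / 3 + 2 * real (3 ^ (m - 1))"
proof -
  define r :: real where "r = 3 ^ (m - 1)"
  define Q where "Q u = (\<Sum>v\<in>{0, 1, 2}. real (trace_pair_count m (u :: 'a) v) ^ 2)" for u
  have Q_ge: "r ^ 2 / 3 \<le> Q u" if "u \<in> {0, 1, 2}" for u
  proof -
    have "(\<Sum>v\<in>{0, 1, 2}. real (trace_pair_count m u v)) = r"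
      using sum_trace_pair_count_row[OF that] by (simp add: r_def)
    then show ?thesis
      using sum_squares_three_ge unfolding Q_def sum_zero_one_two_CHAR_3[OF CHAR_eq_3] by metis
  qed
  have "(\<Sum>u\<in>{0, 1, 2}. Q u) = r ^ 2 + 2 * r"
    using arg_cong[OF sum_trace_pair_count_squares, of real] unfolding Q_def r_def
    by (simp add: of_nat_sum)
  moreover have "Q c - r ^ 2 / 3 \<le> (\<Sum>u\<in>{0, 1, 2}. Q u - r ^ 2 / 3)"
    by (rule member_le_sum) (use assms Q_ge in auto)
  moreover have "(\<Sum>u\<in>{0, 1, 2}. Q u - r ^ 2 / 3) = (\<Sum>u\<in>{0, 1, 2}. Q u) - r ^ 2"
    by (simp add: sum_zero_one_two_CHAR_3[OF CHAR_eq_3])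
  ultimately show ?thesis
    unfolding Q_def r_def by simp
qed

end

theorem lemma6:
  fixes m i :: nat
  assumes "m \<ge> 1"
    and "card (UNIV :: 'a::{field,finite} set) = 3 ^ m"
    and "i \<in> {0, 1, 2}"
  shows "real (card {x :: 'a. abs_trace3 m x = of_nat i \<and> abs_trace3 m (x ^ 2) = 0})
           \<ge> (real (3 ^ m) - 6 * sqrt (real (3 ^ m))) / 9"
proof -
  define c :: 'a where "c = of_nat i"
  define r :: real where "r = 3 ^ (m - 1)"
  have c: "c \<in> {0, 1, 2}"
    using assms(3) by (auto simp: c_def)
  have "(\<Sum>v\<in>{0, 1, 2}. real (trace_pair_count m c v)) = r"
    using sum_trace_pair_count_row[OF assms(1,2) c] by (simp add: r_def)
  moreover have "(\<Sum>v\<in>{0, 1, 2}. real (trace_pair_count m c v) ^ 2) \<le> r ^ 2 / 3 + 2 * r"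
    using sum_trace_pair_count_row_squares_le[OF assms(1,2) c] unfolding r_def by simp
  ultimately have "(3 * r - 6 * sqrt (3 * r)) / 9 \<le> real (trace_pair_count m c 0)"
    unfolding sum_zero_one_two_CHAR_3[OF CHAR_eq_3[OF assms(1,2)]]
    by (rule lower_bound_from_sum_squares)
  moreover have "real (3 ^ m) = 3 * r"
    using assms(1) by (cases m) (simp_all add: r_def)
  ultimately show ?thesis
    by (simp add: trace_pair_count_def c_def)
qed

end
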